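(* Let $\mathbb{F}\in\{\mathbb{R},\mathbb{C},\mathbb{H}\}$, $G=\mathrm{SL}(3,\mathbb{F})$, $g\in G$ and $t\in V$. If $g\in Ka_tH$, then $$\Phi(g)=\Big(\sum_{i=1}^3e^{4t_i}\Big)\Big(\sum_{i=1}^3e^{-4t_i}\Big)=3+2\cosh(4(t_1-t_2))+2\cosh(4(t_1-t_3))+2\cosh(4(t_2-t_3)).$$ In particular $\Phi$ is left $K$-invariant, right $H$-invariant, $\Phi\circ\sigma=\Phi$, and the restriction of $\Phi$ to $A=\{a_t:t\in V\}$ is invariant under the Weyl group (permutations of $t_1,t_2,t_3$).
   Context: $\theta(g)=(g^{-1})^\dagger$, $J=\mathrm{diag}(1,-1,-1)$, $\sigma(g)=J\theta(g)J$, $K=G^\theta$, $H$ the identity component of $G^\sigma$. $\Phi(g)=\|g\sigma(g)^{-1}\|_{HS}^2\,\|\sigma(g)g^{-1}\|_{HS}^2$ where $\|X\|_{HS}^2=\sum_{i,j}|X_{ij}|^2$. $V=\{t\in\mathbb{R}^3:t_1+t_2+t_3=0\}$ and $a_t=\mathrm{diag}(e^{t_1},e^{t_2},e^{t_3})$. *)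

theory Defs
  imports "HOL-Analysis.Analysis"
begin

datatype quat = Quat (qRe: real) (qI: real) (qJ: real) (qK: real)

lemma quat_eq_iff: "x = y \<longleftrightarrow> qRe x = qRe y \<and> qI x = qI y \<and> qJ x = qJ y \<and> qK x = qK y"
  by (cases x; cases y) auto

instantiation quat :: ring_1
begin
definition "0 = Quat 0 0 0 0"
definition "1 = Quat 1 0 0 0"
definition "x + y = Quat (qRe x + qRe y) (qI x + qI y) (qJ x + qJ y) (qK x + qK y)"
definition "x - y = Quat (qRe x - qRe y) (qI x - qI y) (qJ x - qJ y) (qK x - qK y)"
definition "- x = Quat (- qRe x) (- qI x) (- qJ x) (- qK x)"
definition "x * y = Quat
   (qRe x * qRe y - qI x * qI y - qJ x * qJ y - qK x * qK y)
   (qRe x * qI y + qI x * qRe y + qJ x * qK y - qK x * qJ y)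
   (qRe x * qJ y - qI x * qK y + qJ x * qRe y + qK x * qI y)
   (qRe x * qK y + qI x * qJ y - qJ x * qI y + qK x * qRe y)"
instance
  by standard (simp_all add: quat_eq_iff zero_quat_def one_quat_def plus_quat_def
      minus_quat_def uminus_quat_def times_quat_def algebra_simps)
end

instantiation quat :: real_algebra_1
begin
definition "scaleR r x = Quat (r * qRe x) (r * qI x) (r * qJ x) (r * qK x)"
instance
  by standard (simp_all add: quat_eq_iff scaleR_quat_def zero_quat_def one_quat_def plus_quat_def
      minus_quat_def uminus_quat_def times_quat_def algebra_simps)
end

text \<open>Class of the three scalar types: standard conjugation (cj), real coordinates
  (coords, used for the Euclidean topology and the modulus) and the group SL(3,F).\<close>

class sl3_scalar = real_algebra_1 +
  fixes cj :: "'a \<Rightarrow> 'a"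
    and coords :: "'a \<Rightarrow> real^4"
    and SL3 :: "('a^3^3) set"

text \<open>Complex 2x2-block representation of a quaternion q = z + w j
  (z = a + b i, w = c + d i), block [[z, w], [-cnj w, cnj z]].\<close>

definition quat_block :: "quat \<Rightarrow> 2 \<Rightarrow> 2 \<Rightarrow> complex" where
  "quat_block q s r =
     (let z = Complex (qRe q) (qI q); w = Complex (qJ q) (qK q) in
      if s = 0 \<and> r = 0 then z else if s = 0 \<and> r = 1 then w
      else if s = 1 \<and> r = 0 then - cnj w else cnj z)"

definition quat_cmat :: "quat^3^3 \<Rightarrow> complex^(3 \<times> 2)^(3 \<times> 2)" where
  "quat_cmat g = (\<chi> p q. quat_block (g $ fst p $ fst q) (snd p) (snd q))"

instantiation real :: sl3_scalar
begin
definition "cj (x::real) = x"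
definition "coords (x::real) = vector [x, 0, 0, 0]"
definition "SL3 = {g :: real^3^3. det g = 1}"
instance ..
end

instantiation complex :: sl3_scalar
begin
definition "cj (z::complex) = cnj z"
definition "coords (z::complex) = vector [Re z, Im z, 0, 0]"
definition "SL3 = {g :: complex^3^3. det g = 1}"
instance ..
end

instantiation quat :: sl3_scalar
begin
definition "cj q = Quat (qRe q) (- qI q) (- qJ q) (- qK q)"
definition "coords q = vector [qRe q, qI q, qJ q, qK q]"
definition "SL3 = {g :: quat^3^3. det (quat_cmat g) = 1}"
instance ..
end

abbreviation G :: "(('a::sl3_scalar)^3^3) set" where "G \<equiv> SL3"

definition absq :: "'a::sl3_scalar \<Rightarrow> real" where
  "absq x = (norm (coords x))\<^sup>2"

definition ctrans :: "('a::sl3_scalar)^3^3 \<Rightarrow> 'a^3^3" where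
  "ctrans g = (\<chi> i j. cj (g $ j $ i))"

definition theta :: "('a::sl3_scalar)^3^3 \<Rightarrow> 'a^3^3" where
  "theta g = ctrans (matrix_inv g)"

definition Jmat :: "('a::sl3_scalar)^3^3" where
  "Jmat = (\<chi> i j. if i = j then (if i = 1 then 1 else -1) else 0)"

definition sigma :: "('a::sl3_scalar)^3^3 \<Rightarrow> 'a^3^3" where
  "sigma g = Jmat ** theta g ** Jmat"

definition Kgrp :: "(('a::sl3_scalar)^3^3) set" where
  "Kgrp = {g \<in> G. theta g = g}"

definition Gsigma :: "(('a::sl3_scalar)^3^3) set" where
  "Gsigma = {g \<in> G. sigma g = g}"

text \<open>Real coordinates of a matrix (identifies F^(3x3) with a Euclidean space)\<close>
definition mcoords :: "('a::sl3_scalar)^3^3 \<Rightarrow> real^4^3^3" where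
  "mcoords g = (\<chi> i j. coords (g $ i $ j))"

definition Hgrp :: "(('a::sl3_scalar)^3^3) set" where
  "Hgrp = {h \<in> Gsigma. mcoords h \<in> connected_component_set (mcoords ` (Gsigma :: (('a^3^3) set))) (mcoords (mat 1 :: 'a^3^3))}"

definition hs2 :: "('a::sl3_scalar)^3^3 \<Rightarrow> real" where
  "hs2 X = (\<Sum>i\<in>UNIV. \<Sum>j\<in>UNIV. absq (X $ i $ j))"

definition Phi :: "('a::sl3_scalar)^3^3 \<Rightarrow> real" where
  "Phi g = hs2 (g ** matrix_inv (sigma g)) * hs2 (sigma g ** matrix_inv g)"

definition Vsp :: "(real^3) set" where
  "Vsp = {t. t $ 1 + t $ 2 + t $ 3 = 0}"

definition a_t :: "real^3 \<Rightarrow> ('a::sl3_scalar)^3^3" where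
  "a_t t = (\<chi> i j. if i = j then of_real (exp (t $ i)) else 0)"

definition KaH :: "real^3 \<Rightarrow> (('a::sl3_scalar)^3^3) set" where
  "KaH t = {k ** a_t t ** h | k h. k \<in> Kgrp \<and> h \<in> Hgrp}"

definition lemma1p9_claim :: "'a::sl3_scalar itself \<Rightarrow> bool" where
  "lemma1p9_claim (_ :: 'a itself) \<longleftrightarrow>
    (\<forall>(g::'a^3^3) t. g \<in> G \<and> t \<in> Vsp \<and> g \<in> KaH t \<longrightarrow>
        Phi g = (\<Sum>i\<in>UNIV. exp (4 * t $ i)) * (\<Sum>i\<in>UNIV. exp (- 4 * t $ i)) \<and>
        (\<Sum>i\<in>UNIV. exp (4 * t $ i)) * (\<Sum>i\<in>UNIV. exp (- 4 * t $ i)) =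
          3 + 2 * cosh (4 * (t $ 1 - t $ 2)) + 2 * cosh (4 * (t $ 1 - t $ 3))
            + 2 * cosh (4 * (t $ 2 - t $ 3))) \<and>
    (\<forall>(k::'a^3^3) g. k \<in> Kgrp \<and> g \<in> G \<longrightarrow> Phi (k ** g) = Phi g) \<and>
    (\<forall>(g::'a^3^3) h. g \<in> G \<and> h \<in> Hgrp \<longrightarrow> Phi (g ** h) = Phi g) \<and>
    (\<forall>(g::'a^3^3). g \<in> G \<longrightarrow> Phi (sigma g) = Phi g) \<and>
    (\<forall>t \<pi>. t \<in> Vsp \<and> \<pi> permutes (UNIV :: 3 set) \<longrightarrow>
        Phi (a_t (\<chi> i. t $ \<pi> i) :: 'a^3^3) = Phi (a_t t :: 'a^3^3))"

end

(* Phi sees g only through g sigma(g)^-1 and sigma(g) g^-1. Left multiplication by k in K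
   changes these by unitary factors (k, sigma k = J k J and their inverses), which the
   Hilbert-Schmidt norm ignores, and right multiplication by h in H cancels since sigma h = h.
   Hence Phi(k a_t h) = Phi(a_t), and as sigma(a_t) = a_t^-1 one gets
   Phi(a_t) = |a_t^2|^2 |a_t^-2|^2. All of this is formal in a real algebra with an involution;
   the three scalar fields differ only in why elements of SL(3,F) are invertible, which for the
   quaternions is seen through the complex 2x2-block representation. *)

theory Submission
  imports Defs
begin

lemma matrix_inv_right:
  fixes A :: "'a::semiring_1^'n^'m"
  assumes "invertible A"
  shows "A ** matrix_inv A = mat 1"
  using someI_ex[OF assms[unfolded invertible_def]] unfolding matrix_inv_def by blast

lemma matrix_inv_left:
  fixes A :: "'a::semiring_1^'n^'m"
  assumes "invertible A"
  shows "matrix_inv A ** A = mat 1"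
  using someI_ex[OF assms[unfolded invertible_def]] unfolding matrix_inv_def by blast

lemma matrix_inv_unique:
  fixes A :: "'a::semiring_1^'n^'m"
  assumes AB: "A ** B = mat 1" and BA: "B ** A = mat 1"
  shows "matrix_inv A = B"
proof -
  have "invertible A"
    using AB BA unfolding invertible_def by blast
  then have "B ** (A ** matrix_inv A) = B"
    by (simp add: matrix_inv_right)
  then show ?thesis
    by (simp add: matrix_mul_assoc BA)
qed

lemma invertible_matrix_inv:
  fixes A :: "'a::semiring_1^'n^'m"
  shows "invertible A \<Longrightarrow> invertible (matrix_inv A)"
  unfolding invertible_def[of "matrix_inv A"] using matrix_inv_left matrix_inv_right by blast

lemma matrix_inv_matrix_inv:
  fixes A :: "'a::semiring_1^'n^'m"
  shows "invertible A \<Longrightarrow> matrix_inv (matrix_inv A) = A"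
  by (intro matrix_inv_unique matrix_inv_left matrix_inv_right)

lemma matrix_inv_mult:
  fixes A :: "'a::semiring_1^'n^'m" and B :: "'a^'k^'n"
  assumes A: "invertible A" and B: "invertible B"
  shows "matrix_inv (A ** B) = matrix_inv B ** matrix_inv A"
proof (rule matrix_inv_unique)
  have "A ** (B ** matrix_inv B) ** matrix_inv A = mat 1"
    by (simp add: matrix_inv_right A B)
  then show "A ** B ** (matrix_inv B ** matrix_inv A) = mat 1"
    by (simp add: matrix_mul_assoc)
  have "matrix_inv B ** (matrix_inv A ** A) ** B = mat 1"
    by (simp add: matrix_inv_left A B)
  then show "matrix_inv B ** matrix_inv A ** (A ** B) = mat 1"
    by (simp add: matrix_mul_assoc)
qed

definition diag_mat :: "('n \<Rightarrow> real) \<Rightarrow> 'a::real_algebra_1^'n^'n" where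
  "diag_mat d = (\<chi> i j. if i = j then of_real (d i) else 0)"

lemma diag_mat_mult: "diag_mat d ** diag_mat e = (diag_mat (\<lambda>i. d i * e i) :: 'a::real_algebra_1^'n^'n)"
proof -
  have "(\<Sum>k\<in>UNIV. (if i = k then of_real (d i) else 0) * (if k = j then of_real (e k) else 0))
      = (\<Sum>k\<in>UNIV. if k = i then (if i = j then of_real (d i * e i) else 0) else (0::'a))"
    for i j :: 'n
    by (rule sum.cong) auto
  then show ?thesis
    by (simp add: diag_mat_def matrix_matrix_mult_def vec_eq_iff)
qed

lemma diag_mat_one: "diag_mat (\<lambda>_. 1) = (mat 1 :: 'a::real_algebra_1^'n^'n)"
  by (simp add: diag_mat_def mat_def vec_eq_iff)

lemma diag_mat_inverse:
  assumes "\<And>i. d i \<noteq> 0"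
  shows "diag_mat d ** diag_mat (\<lambda>i. inverse (d i)) = (mat 1 :: 'a::real_algebra_1^'n^'n)"
    and "diag_mat (\<lambda>i. inverse (d i)) ** diag_mat d = (mat 1 :: 'a::real_algebra_1^'n^'n)"
  by (simp_all add: diag_mat_mult assms flip: diag_mat_one)

lemma invertible_diag_mat:
  "(\<And>i. d i \<noteq> 0) \<Longrightarrow> invertible (diag_mat d :: 'a::real_algebra_1^'n^'n)"
  using diag_mat_inverse unfolding invertible_def by blast

lemma matrix_inv_diag_mat:
  "(\<And>i. d i \<noteq> 0) \<Longrightarrow>
    matrix_inv (diag_mat d :: 'a::real_algebra_1^'n^'n) = diag_mat (\<lambda>i. inverse (d i))"
  using diag_mat_inverse by (rule matrix_inv_unique)

lemma Jmat_eq_diag_mat: "Jmat = diag_mat (\<lambda>i. if i = 1 then 1 else -1)"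
  by (simp add: Jmat_def diag_mat_def vec_eq_iff)

lemma Jmat_Jmat: "Jmat ** Jmat = (mat 1 :: 'a::sl3_scalar^3^3)"
  unfolding Jmat_eq_diag_mat diag_mat_mult diag_mat_one[symmetric]
  by (rule arg_cong[where f = diag_mat]) auto

lemma a_t_eq_diag_mat: "a_t t = diag_mat (\<lambda>i. exp (t $ i))"
  unfolding a_t_def diag_mat_def ..

text \<open>The axioms use scaleR instead of of_real and absq: class axioms may only mention the
  class operations.\<close>

class sl3_star = sl3_scalar +
  assumes cj_add: "cj (a + b) = cj a + cj b"
    and cj_mult: "cj (a * b) = cj b * cj a"
    and cj_cj [simp]: "cj (cj a) = a"
    and cj_scaleR_one: "cj (r *\<^sub>R 1) = r *\<^sub>R 1"
    and norm_coords_left: "(norm (coords a))\<^sup>2 *\<^sub>R 1 = cj a * a"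
    and norm_coords_right: "(norm (coords a))\<^sup>2 *\<^sub>R 1 = a * cj a"

lemma cj_of_real [simp]: "cj (of_real r :: 'a::sl3_star) = of_real r"
  unfolding of_real_def by (rule cj_scaleR_one)

lemma cj_zero [simp]: "cj (0 :: 'a::sl3_star) = 0"
  using cj_of_real[of 0] by simp

lemma cj_one [simp]: "cj (1 :: 'a::sl3_star) = 1"
  using cj_of_real[of 1] by simp

lemma cj_sum: "cj (sum f S) = (\<Sum>x\<in>S. cj (f x :: 'a::sl3_star))"
  by (induction S rule: infinite_finite_induct) (simp_all add: cj_add)

lemma of_real_absq_left: "of_real (absq a) = cj a * (a :: 'a::sl3_star)"
  unfolding absq_def of_real_def by (rule norm_coords_left)

lemma of_real_absq_right: "of_real (absq a) = a * cj (a :: 'a::sl3_star)"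
  unfolding absq_def of_real_def by (rule norm_coords_right)

lemma absq_of_real [simp]: "absq (of_real r :: 'a::sl3_star) = r\<^sup>2"
proof -
  have "(of_real (absq (of_real r :: 'a)) :: 'a) = of_real (r\<^sup>2)"
    by (simp add: of_real_absq_left power2_eq_square)
  then show ?thesis
    by (simp only: of_real_eq_iff)
qed

lemma absq_zero [simp]: "absq (0 :: 'a::sl3_star) = 0"
  using absq_of_real[of 0] by simp

lemma ctrans_mult: "ctrans (A ** B) = ctrans B ** ctrans (A :: 'a::sl3_star^3^3)"
  by (simp add: ctrans_def matrix_matrix_mult_def vec_eq_iff cj_sum cj_mult)

lemma ctrans_ctrans [simp]: "ctrans (ctrans A) = (A :: 'a::sl3_star^3^3)"
  by (simp add: ctrans_def vec_eq_iff)

lemma ctrans_mat_one [simp]: "ctrans (mat 1) = (mat 1 :: 'a::sl3_star^3^3)"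
  by (simp add: ctrans_def mat_def vec_eq_iff)

lemma ctrans_diag_mat [simp]: "ctrans (diag_mat d) = (diag_mat d :: 'a::sl3_star^3^3)"
  by (simp add: ctrans_def diag_mat_def vec_eq_iff)

lemma ctrans_inverse:
  fixes A :: "'a::sl3_star^3^3"
  assumes "invertible A"
  shows "ctrans A ** ctrans (matrix_inv A) = mat 1" and "ctrans (matrix_inv A) ** ctrans A = mat 1"
  by (simp_all add: assms matrix_inv_left matrix_inv_right flip: ctrans_mult)

lemma invertible_ctrans: "invertible A \<Longrightarrow> invertible (ctrans A :: 'a::sl3_star^3^3)"
  using ctrans_inverse unfolding invertible_def by blast

lemma matrix_inv_ctrans:
  "invertible A \<Longrightarrow> matrix_inv (ctrans A) = ctrans (matrix_inv A :: 'a::sl3_star^3^3)"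
  using ctrans_inverse by (rule matrix_inv_unique)

lemma invertible_theta: "invertible A \<Longrightarrow> invertible (theta A :: 'a::sl3_star^3^3)"
  unfolding theta_def by (intro invertible_ctrans invertible_matrix_inv)

lemma theta_theta: "invertible A \<Longrightarrow> theta (theta A) = (A :: 'a::sl3_star^3^3)"
  by (simp add: theta_def matrix_inv_ctrans invertible_matrix_inv matrix_inv_matrix_inv)

lemma theta_mult:
  "invertible A \<Longrightarrow> invertible B \<Longrightarrow> theta (A ** B) = theta A ** theta (B :: 'a::sl3_star^3^3)"
  by (simp add: theta_def matrix_inv_mult ctrans_mult)

lemma theta_diag_mat:
  "(\<And>i. d i \<noteq> 0) \<Longrightarrow> theta (diag_mat d :: 'a::sl3_star^3^3) = diag_mat (\<lambda>i. inverse (d i))"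
  by (simp add: theta_def matrix_inv_diag_mat)

lemma invertible_Jmat: "invertible (Jmat :: 'a::sl3_star^3^3)"
  unfolding invertible_def using Jmat_Jmat by blast

lemma theta_Jmat: "theta Jmat = (Jmat :: 'a::sl3_star^3^3)"
  unfolding Jmat_eq_diag_mat by (subst theta_diag_mat) (auto intro!: arg_cong[where f = diag_mat])

lemma invertible_sigma: "invertible A \<Longrightarrow> invertible (sigma A :: 'a::sl3_star^3^3)"
  unfolding sigma_def by (intro invertible_mult invertible_Jmat invertible_theta)

lemma sigma_mult:
  fixes A B :: "'a::sl3_star^3^3"
  assumes "invertible A" and "invertible B"
  shows "sigma (A ** B) = sigma A ** sigma B"
proof -
  have "sigma A ** sigma B = Jmat ** theta A ** (Jmat ** Jmat) ** theta B ** Jmat"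
    unfolding sigma_def by (simp only: matrix_mul_assoc)
  then show ?thesis
    by (simp add: sigma_def theta_mult assms Jmat_Jmat matrix_mul_assoc)
qed

lemma sigma_sigma:
  assumes "invertible (A :: 'a::sl3_star^3^3)"
  shows "sigma (sigma A) = A"
proof -
  have "sigma (sigma A) = (Jmat ** Jmat) ** theta (theta A) ** (Jmat ** Jmat)"
    by (simp add: sigma_def theta_mult theta_Jmat invertible_Jmat invertible_theta assms
        invertible_mult matrix_mul_assoc)
  then show ?thesis
    by (simp add: Jmat_Jmat theta_theta assms)
qed

lemma sigma_diag_mat:
  assumes "\<And>i. d i \<noteq> 0"
  shows "sigma (diag_mat d :: 'a::sl3_star^3^3) = diag_mat (\<lambda>i. inverse (d i))"
  unfolding sigma_def Jmat_eq_diag_mat theta_diag_mat[OF assms] diag_mat_mult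
  by (rule arg_cong[where f = diag_mat]) auto

definition unitary_mat :: "'a::sl3_star^3^3 \<Rightarrow> bool" where
  "unitary_mat U \<longleftrightarrow> ctrans U ** U = mat 1 \<and> U ** ctrans U = mat 1"

lemma unitary_mat_invertible: "unitary_mat U \<Longrightarrow> invertible U"
  unfolding unitary_mat_def invertible_def by blast

lemma matrix_inv_unitary_mat: "unitary_mat U \<Longrightarrow> matrix_inv U = ctrans U"
  unfolding unitary_mat_def by (intro matrix_inv_unique) auto

lemma unitary_mat_ctrans: "unitary_mat U \<Longrightarrow> unitary_mat (ctrans U)"
  unfolding unitary_mat_def by simp

lemma unitary_mat_mult:
  assumes "unitary_mat U" and "unitary_mat V"
  shows "unitary_mat (U ** V)"
proof -
  have "ctrans V ** (ctrans U ** U) ** V = mat 1" and "U ** (V ** ctrans V) ** ctrans U = mat 1"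
    using assms unfolding unitary_mat_def by simp_all
  then show ?thesis
    unfolding unitary_mat_def ctrans_mult by (simp add: matrix_mul_assoc)
qed

lemma unitary_mat_Jmat: "unitary_mat Jmat"
  unfolding unitary_mat_def Jmat_eq_diag_mat ctrans_diag_mat
  using Jmat_Jmat[unfolded Jmat_eq_diag_mat] by simp

lemma unitary_mat_if_theta_fixed: "invertible U \<Longrightarrow> theta U = U \<Longrightarrow> unitary_mat U"
  unfolding unitary_mat_def theta_def
  by (metis ctrans_ctrans matrix_inv_left matrix_inv_right)

lemma unitary_mat_sigma:
  assumes "unitary_mat U"
  shows "unitary_mat (sigma U)"
proof -
  have "theta U = U"
    using assms by (simp add: theta_def matrix_inv_unitary_mat)
  then show ?thesis
    unfolding sigma_def \<open>theta U = U\<close> by (intro unitary_mat_mult unitary_mat_Jmat assms)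
qed

lemma of_real_hs2_left: "of_real (hs2 X) = trace (ctrans X ** (X :: 'a::sl3_star^3^3))"
proof -
  have "trace (ctrans X ** X) = (\<Sum>j\<in>UNIV. \<Sum>i\<in>UNIV. cj (X $ i $ j) * X $ i $ j)"
    by (simp add: trace_def ctrans_def matrix_matrix_mult_def)
  also have "\<dots> = (\<Sum>i\<in>UNIV. \<Sum>j\<in>UNIV. cj (X $ i $ j) * X $ i $ j)"
    by (rule sum.swap)
  finally show ?thesis
    by (simp add: hs2_def of_real_sum of_real_absq_left)
qed

lemma of_real_hs2_right: "of_real (hs2 X) = trace (X ** ctrans (X :: 'a::sl3_star^3^3))"
  by (simp add: hs2_def trace_def of_real_sum of_real_absq_right ctrans_def matrix_matrix_mult_def)

text \<open>The scalars need not commute, so the trace is not cyclic: left and right unitary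
  invariance use the two different trace formulas for hs2.\<close>

lemma hs2_unitary_mult_left:
  assumes "unitary_mat U"
  shows "hs2 (U ** X) = hs2 X"
proof -
  have "ctrans (U ** X) ** (U ** X) = ctrans X ** (ctrans U ** U) ** X"
    by (simp add: ctrans_mult matrix_mul_assoc)
  also have "\<dots> = ctrans X ** X"
    using assms by (simp add: unitary_mat_def)
  finally have "(of_real (hs2 (U ** X)) :: 'a) = of_real (hs2 X)"
    by (simp only: of_real_hs2_left)
  then show ?thesis
    by simp
qed

lemma hs2_unitary_mult_right:
  assumes "unitary_mat U"
  shows "hs2 (X ** U) = hs2 X"
proof -
  have "(X ** U) ** ctrans (X ** U) = X ** (U ** ctrans U) ** ctrans X"
    by (simp add: ctrans_mult matrix_mul_assoc)
  also have "\<dots> = X ** ctrans X"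
    using assms by (simp add: unitary_mat_def)
  finally have "(of_real (hs2 (X ** U)) :: 'a) = of_real (hs2 X)"
    by (simp only: of_real_hs2_right)
  then show ?thesis
    by simp
qed

lemma hs2_unitary_mult: "unitary_mat U \<Longrightarrow> unitary_mat V \<Longrightarrow> hs2 (U ** X ** V) = hs2 X"
  by (simp add: hs2_unitary_mult_left hs2_unitary_mult_right)

lemma Phi_unitary_mult:
  fixes U g :: "'a::sl3_star^3^3"
  assumes U: "unitary_mat U" and g: "invertible g"
  shows "Phi (U ** g) = Phi g"
proof -
  have iU: "invertible U" and SU: "unitary_mat (sigma U)"
    using U by (simp_all add: unitary_mat_invertible unitary_mat_sigma)
  have sigma_Ug: "sigma (U ** g) = sigma U ** sigma g"
    using iU g by (rule sigma_mult)
  have "matrix_inv (sigma (U ** g)) = matrix_inv (sigma g) ** ctrans (sigma U)"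
    unfolding sigma_Ug
    by (simp add: matrix_inv_mult unitary_mat_invertible SU invertible_sigma g matrix_inv_unitary_mat)
  then have g_sigma_inv: "U ** g ** matrix_inv (sigma (U ** g)) = U ** (g ** matrix_inv (sigma g)) ** ctrans (sigma U)"
    by (simp only: matrix_mul_assoc)
  have "matrix_inv (U ** g) = matrix_inv g ** ctrans U"
    by (simp add: matrix_inv_mult iU g matrix_inv_unitary_mat U)
  then have sigma_g_inv: "sigma (U ** g) ** matrix_inv (U ** g) = sigma U ** (sigma g ** matrix_inv g) ** ctrans U"
    unfolding sigma_Ug by (simp only: matrix_mul_assoc)
  show ?thesis
    unfolding Phi_def g_sigma_inv sigma_g_inv by (simp add: hs2_unitary_mult U SU unitary_mat_ctrans)
qed

lemma Phi_mult_sigma_fixed: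
  fixes g h :: "'a::sl3_star^3^3"
  assumes g: "invertible g" and h: "invertible h" and "sigma h = h"
  shows "Phi (g ** h) = Phi g"
proof -
  have sigma_gh: "sigma (g ** h) = sigma g ** h"
    using sigma_mult[OF g h] \<open>sigma h = h\<close> by simp
  have "g ** h ** matrix_inv (sigma (g ** h)) = g ** (h ** matrix_inv h) ** matrix_inv (sigma g)"
    unfolding sigma_gh matrix_inv_mult[OF invertible_sigma[OF g] h] by (simp only: matrix_mul_assoc)
  moreover have "sigma (g ** h) ** matrix_inv (g ** h) = sigma g ** (h ** matrix_inv h) ** matrix_inv g"
    unfolding sigma_gh matrix_inv_mult[OF g h] by (simp only: matrix_mul_assoc)
  ultimately show ?thesis
    by (simp add: Phi_def matrix_inv_right h)
qed

lemma Phi_sigma: "invertible g \<Longrightarrow> Phi (sigma g) = Phi (g :: 'a::sl3_star^3^3)"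
  by (simp add: Phi_def sigma_sigma)

lemma hs2_diag_mat: "hs2 (diag_mat d :: 'a::sl3_star^3^3) = (\<Sum>i\<in>UNIV. (d i)\<^sup>2)"
proof -
  have "hs2 (diag_mat d :: 'a^3^3) = (\<Sum>i\<in>UNIV. \<Sum>j\<in>UNIV. if i = j then (d i)\<^sup>2 else 0)"
    unfolding hs2_def diag_mat_def by (intro sum.cong) simp_all
  then show ?thesis
    by simp
qed

lemma Phi_diag_mat:
  assumes "\<And>i. d i \<noteq> 0"
  shows "Phi (diag_mat d :: 'a::sl3_star^3^3) = (\<Sum>i\<in>UNIV. d i ^ 4) * (\<Sum>i\<in>UNIV. inverse (d i) ^ 4)"
proof -
  have "inverse (d i) \<noteq> 0" for i
    using assms by simp
  then show ?thesis
    by (simp add: Phi_def sigma_diag_mat assms matrix_inv_diag_mat diag_mat_mult hs2_diag_mat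
        power2_eq_square eval_nat_numeral mult.assoc)
qed

lemma Phi_a_t:
  "Phi (a_t t :: 'a::sl3_star^3^3) = (\<Sum>i\<in>UNIV. exp (4 * t $ i)) * (\<Sum>i\<in>UNIV. exp (- 4 * t $ i))"
proof -
  have exp4: "exp x ^ 4 = exp (4 * x)" for x :: real
    using exp_of_nat_mult[of 4 x] by simp
  then have "inverse (exp x) ^ 4 = exp (- 4 * x)" for x :: real
    by (simp add: exp_minus power_inverse)
  with exp4 show ?thesis
    by (simp add: a_t_eq_diag_mat Phi_diag_mat)
qed

lemma Phi_a_t_permute:
  assumes "\<pi> permutes (UNIV :: 3 set)"
  shows "Phi (a_t (\<chi> i. t $ \<pi> i) :: 'a::sl3_star^3^3) = Phi (a_t t :: 'a^3^3)"
  using sum.permute[OF assms, of "\<lambda>i. exp (4 * t $ i)"] sum.permute[OF assms, of "\<lambda>i. exp (- 4 * t $ i)"]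
  by (simp add: Phi_a_t comp_def)

lemma sum_exp_mult_sum_exp_minus:
  fixes t :: "real^3"
  shows "(\<Sum>i\<in>UNIV. exp (4 * t $ i)) * (\<Sum>i\<in>UNIV. exp (- 4 * t $ i)) =
    3 + 2 * cosh (4 * (t $ 1 - t $ 2)) + 2 * cosh (4 * (t $ 1 - t $ 3)) + 2 * cosh (4 * (t $ 2 - t $ 3))"
proof -
  have cosh: "2 * cosh (4 * (x - y)) = exp (4 * x) * exp (- 4 * y) + exp (4 * y) * exp (- 4 * x)"
    for x y :: real
    by (simp add: cosh_def algebra_simps flip: exp_add)
  have inv: "exp (4 * x) * exp (- 4 * x) = 1" for x :: real
    by (simp flip: exp_add)
  show ?thesis
    unfolding sum_3 cosh using inv[of "t $ 1"] inv[of "t $ 2"] inv[of "t $ 3"] by algebra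
qed

lemma invertible_a_t: "invertible (a_t t :: 'a::sl3_scalar^3^3)"
  unfolding a_t_eq_diag_mat by (rule invertible_diag_mat) simp

lemma lemma1p9_claim_if_SL3_invertible:
  assumes SL3_invertible: "\<And>g :: 'a::sl3_star^3^3. g \<in> SL3 \<Longrightarrow> invertible g"
  shows "lemma1p9_claim TYPE('a)"
proof -
  have K: "unitary_mat k" if "k \<in> Kgrp" for k :: "'a^3^3"
    using that SL3_invertible unfolding Kgrp_def by (blast intro: unitary_mat_if_theta_fixed)
  have H: "invertible h \<and> sigma h = h" if "h \<in> Hgrp" for h :: "'a^3^3"
    using that SL3_invertible unfolding Hgrp_def Gsigma_def by blast
  have Phi_KaH: "Phi g = Phi (a_t t :: 'a^3^3)" if "g \<in> KaH t" for g :: "'a^3^3" and t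
  proof -
    obtain k h where g: "g = k ** a_t t ** h" and k: "k \<in> Kgrp" and h: "h \<in> Hgrp"
      using \<open>g \<in> KaH t\<close> unfolding KaH_def by blast
    have "Phi g = Phi (k ** a_t t)"
      unfolding g using K[OF k] H[OF h]
      by (intro Phi_mult_sigma_fixed invertible_mult invertible_a_t) (auto intro: unitary_mat_invertible)
    also have "\<dots> = Phi (a_t t :: 'a^3^3)"
      using K[OF k] invertible_a_t by (rule Phi_unitary_mult)
    finally show ?thesis .
  qed
  show ?thesis
    unfolding lemma1p9_claim_def
  proof (intro conjI allI impI; (elim conjE)?)
    fix g :: "'a^3^3" and t
    assume "g \<in> KaH t"
    then show "Phi g = (\<Sum>i\<in>UNIV. exp (4 * t $ i)) * (\<Sum>i\<in>UNIV. exp (- 4 * t $ i))"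
      by (simp add: Phi_KaH Phi_a_t)
  next
    fix k g :: "'a^3^3"
    assume "k \<in> Kgrp" and "g \<in> G"
    then show "Phi (k ** g) = Phi g"
      by (intro Phi_unitary_mult K SL3_invertible)
  next
    fix g h :: "'a^3^3"
    assume "g \<in> G" and "h \<in> Hgrp"
    then show "Phi (g ** h) = Phi g"
      using H SL3_invertible by (simp add: Phi_mult_sigma_fixed)
  next
    fix g :: "'a^3^3"
    assume "g \<in> G"
    then show "Phi (sigma g) = Phi g"
      by (intro Phi_sigma SL3_invertible)
  next
    fix t \<pi>
    assume "\<pi> permutes (UNIV :: 3 set)"
    then show "Phi (a_t (\<chi> i. t $ \<pi> i) :: 'a^3^3) = Phi (a_t t :: 'a^3^3)"
      by (rule Phi_a_t_permute)
  qed (rule sum_exp_mult_sum_exp_minus)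
qed

lemma norm_vector_4: "(norm (vector [a, b, c, d] :: real^4))\<^sup>2 = a\<^sup>2 + b\<^sup>2 + c\<^sup>2 + d\<^sup>2"
proof -
  have "(vector [a, b, c, d] :: real^4) $ 1 = a" "(vector [a, b, c, d] :: real^4) $ 2 = b"
    "(vector [a, b, c, d] :: real^4) $ 3 = c" "(vector [a, b, c, d] :: real^4) $ 4 = d"
    unfolding vector_def by simp_all
  then show ?thesis
    unfolding power2_norm_eq_inner inner_vec_def sum_4 by (simp add: power2_eq_square)
qed

instance real :: sl3_star
proof
  fix a b r :: real
  show "cj (a + b) = cj a + cj b" "cj (a * b) = cj b * cj a" "cj (cj a) = a"
    "cj (r *\<^sub>R (1::real)) = r *\<^sub>R 1"
    by (simp_all add: cj_real_def)
  show "(norm (coords a))\<^sup>2 *\<^sub>R (1::real) = cj a * a"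
    "(norm (coords a))\<^sup>2 *\<^sub>R (1::real) = a * cj a"
    unfolding cj_real_def coords_real_def norm_vector_4 by (simp_all add: power2_eq_square)
qed

instance complex :: sl3_star
proof
  fix a b :: complex and r :: real
  show "cj (a + b) = cj a + cj b" "cj (a * b) = cj b * cj a" "cj (cj a) = a"
    "cj (r *\<^sub>R (1::complex)) = r *\<^sub>R 1"
    by (simp_all add: cj_complex_def)
  show "(norm (coords a))\<^sup>2 *\<^sub>R (1::complex) = cj a * a"
    "(norm (coords a))\<^sup>2 *\<^sub>R (1::complex) = a * cj a"
    unfolding cj_complex_def coords_complex_def norm_vector_4
    by (simp_all add: complex_eq_iff power2_eq_square)
qed

instance quat :: sl3_star
proof
  fix a b :: quat and r :: real
  show "cj (a + b) = cj a + cj b" "cj (a * b) = cj b * cj a" "cj (cj a) = a"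
    "cj (r *\<^sub>R (1::quat)) = r *\<^sub>R 1"
    by (simp_all add: cj_quat_def quat_eq_iff plus_quat_def times_quat_def scaleR_quat_def
        one_quat_def algebra_simps)
  show "(norm (coords a))\<^sup>2 *\<^sub>R (1::quat) = cj a * a"
    "(norm (coords a))\<^sup>2 *\<^sub>R (1::quat) = a * cj a"
    unfolding cj_quat_def coords_quat_def norm_vector_4
    by (simp_all add: quat_eq_iff times_quat_def scaleR_quat_def one_quat_def power2_eq_square
        algebra_simps)
qed

lemma SL3_real_invertible: "g \<in> SL3 \<Longrightarrow> invertible (g :: real^3^3)"
  by (simp add: SL3_real_def invertible_det_nz)

lemma SL3_complex_invertible: "g \<in> SL3 \<Longrightarrow> invertible (g :: complex^3^3)"
  by (simp add: SL3_complex_def invertible_det_nz)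

lemma sum_UNIV_prod: "(\<Sum>p\<in>UNIV. f p) = (\<Sum>i\<in>UNIV. \<Sum>a\<in>UNIV. f (i, a))"
  by (simp add: sum.cartesian_product flip: UNIV_Times_UNIV)

lemma quat_block_entries:
  "quat_block q 0 0 = Complex (qRe q) (qI q)"
  "quat_block q 0 1 = Complex (qJ q) (qK q)"
  "quat_block q 1 0 = - cnj (Complex (qJ q) (qK q))"
  "quat_block q 1 1 = cnj (Complex (qRe q) (qI q))"
  by (simp_all add: quat_block_def)

lemma UNIV_2_cases: obtains "a = (0::2)" | "a = 1"
proof -
  have "(2::2) = 0"
    by simp
  then show thesis
    using exhaust_2[of a] that by metis
qed

lemma sum_UNIV_2: "sum f (UNIV :: 2 set) = f 0 + f 1"
proof -
  have UNIV_2: "UNIV = {0, 1::2}"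
    using UNIV_2_cases by blast
  show ?thesis
    unfolding UNIV_2 by simp
qed

lemma quat_block_zero [simp]: "quat_block 0 a b = 0"
  by (cases a rule: UNIV_2_cases; cases b rule: UNIV_2_cases)
    (simp_all add: quat_block_entries zero_quat_def complex_eq_iff)

lemma quat_block_one: "quat_block 1 a b = (if a = b then 1 else 0)"
  by (cases a rule: UNIV_2_cases; cases b rule: UNIV_2_cases)
    (simp_all add: quat_block_entries one_quat_def complex_eq_iff)

lemma quat_block_add: "quat_block (p + q) a b = quat_block p a b + quat_block q a b"
  by (cases a rule: UNIV_2_cases; cases b rule: UNIV_2_cases)
    (simp_all add: quat_block_entries plus_quat_def complex_eq_iff)

lemma quat_block_sum: "quat_block (sum f S) a b = (\<Sum>x\<in>S. quat_block (f x) a b)"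
  by (induction S rule: infinite_finite_induct) (simp_all add: quat_block_add)

lemma quat_block_mult: "quat_block (p * q) a b = (\<Sum>c\<in>UNIV. quat_block p a c * quat_block q c b)"
  by (cases a rule: UNIV_2_cases; cases b rule: UNIV_2_cases)
    (simp_all add: sum_UNIV_2 quat_block_entries times_quat_def complex_eq_iff algebra_simps)

lemma quat_cmat_mult: "quat_cmat (A ** B) = quat_cmat A ** quat_cmat B"
  by (simp add: quat_cmat_def matrix_matrix_mult_def vec_eq_iff sum_UNIV_prod quat_block_mult
      quat_block_sum)

lemma quat_cmat_mat_one: "quat_cmat (mat 1) = mat 1"
  by (simp add: quat_cmat_def mat_def vec_eq_iff quat_block_one)

lemma quat_cmat_inj: "inj quat_cmat"
proof (rule injI)
  fix A B :: "quat^3^3"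
  assume "quat_cmat A = quat_cmat B"
  then have "quat_cmat A $ (i, 0) $ (k, c) = quat_cmat B $ (i, 0) $ (k, c)" for i k c
    by simp
  then have "quat_block (A $ i $ k) 0 c = quat_block (B $ i $ k) 0 c" for i k c
    by (simp add: quat_cmat_def)
  from this[of _ _ 0] this[of _ _ 1] show "A = B"
    by (simp add: vec_eq_iff quat_eq_iff quat_block_entries)
qed

definition cnj_mat :: "complex^'n^'m \<Rightarrow> complex^'n^'m" where
  "cnj_mat X = (\<chi> i j. cnj (X $ i $ j))"

lemma cnj_mat_mult: "cnj_mat (A ** B) = cnj_mat A ** cnj_mat B"
  by (simp add: cnj_mat_def matrix_matrix_mult_def vec_eq_iff)

lemma cnj_mat_mat_one: "cnj_mat (mat 1) = mat 1"
  by (simp add: cnj_mat_def mat_def vec_eq_iff)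

text \<open>The complex images of quaternionic matrices are exactly the matrices commuting with the
  conjugate-linear map v \<mapsto> j conj(v), cmat_j being the matrix of the quaternion j. Unlike the
  image of quat_cmat, this description is visibly stable under inversion.\<close>

definition cmat_j :: "complex^(3 \<times> 2)^(3 \<times> 2)" where
  "cmat_j = quat_cmat (mat (Quat 0 0 1 0))"

definition quaternionic :: "complex^(3 \<times> 2)^(3 \<times> 2) \<Rightarrow> bool" where
  "quaternionic M \<longleftrightarrow> cmat_j ** cnj_mat M = M ** cmat_j"

lemma quat_cmat_mat_entry: "quat_cmat (mat q) $ (i, a) $ (k, c) = (if i = k then quat_block q a c else 0)"
  by (simp add: quat_cmat_def mat_def)

lemma sum_sum_delta_left:
  fixes i :: "'n::finite" and f :: "'m::finite \<Rightarrow> 'a::semiring_0"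
  shows "(\<Sum>l\<in>UNIV. \<Sum>c\<in>UNIV. (if i = l then f c else 0) * g l c) = (\<Sum>c\<in>UNIV. f c * g i c)"
proof -
  have "(\<Sum>l\<in>UNIV. \<Sum>c\<in>UNIV. (if i = l then f c else 0) * g l c)
      = (\<Sum>l\<in>UNIV. if l = i then (\<Sum>c\<in>UNIV. f c * g i c) else 0)"
    by (rule sum.cong) auto
  then show ?thesis
    by simp
qed

lemma sum_sum_delta_right:
  fixes k :: "'n::finite" and f :: "'m::finite \<Rightarrow> 'a::semiring_0"
  shows "(\<Sum>l\<in>UNIV. \<Sum>c\<in>UNIV. g l c * (if l = k then f c else 0)) = (\<Sum>c\<in>UNIV. g k c * f c)"
proof -
  have "(\<Sum>l\<in>UNIV. \<Sum>c\<in>UNIV. g l c * (if l = k then f c else 0))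
      = (\<Sum>l\<in>UNIV. if l = k then (\<Sum>c\<in>UNIV. g k c * f c) else 0)"
    by (rule sum.cong) auto
  then show ?thesis
    by simp
qed

lemma cmat_j_mult_entry:
  "(cmat_j ** X) $ (i, a) $ p = (\<Sum>c\<in>UNIV. quat_block (Quat 0 0 1 0) a c * X $ (i, c) $ p)"
  by (simp add: cmat_j_def matrix_matrix_mult_def sum_UNIV_prod quat_cmat_mat_entry
      sum_sum_delta_left)

lemma mult_cmat_j_entry:
  "(X ** cmat_j) $ p $ (k, b) = (\<Sum>c\<in>UNIV. X $ p $ (k, c) * quat_block (Quat 0 0 1 0) c b)"
  by (simp add: cmat_j_def matrix_matrix_mult_def sum_UNIV_prod quat_cmat_mat_entry
      sum_sum_delta_right)

lemma quaternionic_quat_cmat: "quaternionic (quat_cmat g)"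
proof -
  have "(cmat_j ** cnj_mat (quat_cmat g)) $ (i, a) $ (k, b) = (quat_cmat g ** cmat_j) $ (i, a) $ (k, b)"
    for i k a b
    by (cases a rule: UNIV_2_cases; cases b rule: UNIV_2_cases)
      (simp_all add: cmat_j_mult_entry mult_cmat_j_entry sum_UNIV_2 cnj_mat_def quat_cmat_def
        quat_block_entries complex_eq_iff)
  then show ?thesis
    unfolding quaternionic_def by (simp add: vec_eq_iff)
qed

lemma quaternionic_inverse:
  assumes M: "quaternionic M" and MN: "M ** N = mat 1" and NM: "N ** M = mat 1"
  shows "quaternionic N"
proof -
  have "N ** cmat_j = N ** cmat_j ** cnj_mat (M ** N)"
    by (simp add: MN cnj_mat_mat_one)
  also have "\<dots> = N ** (cmat_j ** cnj_mat M) ** cnj_mat N"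
    by (simp add: cnj_mat_mult matrix_mul_assoc)
  also have "\<dots> = (N ** M) ** cmat_j ** cnj_mat N"
    using M by (simp add: quaternionic_def matrix_mul_assoc)
  finally show ?thesis
    by (simp add: quaternionic_def NM)
qed

definition quat_of_cmat :: "complex^(3 \<times> 2)^(3 \<times> 2) \<Rightarrow> quat^3^3" where
  "quat_of_cmat N = (\<chi> i k. Quat (Re (N $ (i, 0) $ (k, 0))) (Im (N $ (i, 0) $ (k, 0)))
     (Re (N $ (i, 0) $ (k, 1))) (Im (N $ (i, 0) $ (k, 1))))"

lemma quat_cmat_quat_of_cmat:
  assumes "quaternionic N"
  shows "quat_cmat (quat_of_cmat N) = N"
proof -
  have entry: "(cmat_j ** cnj_mat N) $ (i, 0) $ (k, b) = (N ** cmat_j) $ (i, 0) $ (k, b)" for i k b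
    using assms by (simp add: quaternionic_def)
  have "N $ (i, 1) $ (k, 0) = - cnj (N $ (i, 0) $ (k, 1))" and "N $ (i, 1) $ (k, 1) = cnj (N $ (i, 0) $ (k, 0))"
    for i k
    using entry[of i k 0] entry[of i k 1]
    by (auto simp: cmat_j_mult_entry mult_cmat_j_entry sum_UNIV_2 cnj_mat_def quat_block_entries
        complex_eq_iff)
  then have "quat_cmat (quat_of_cmat N) $ (i, a) $ (k, b) = N $ (i, a) $ (k, b)" for i k a b
    by (cases a rule: UNIV_2_cases; cases b rule: UNIV_2_cases)
      (simp_all add: quat_cmat_def quat_of_cmat_def quat_block_entries)
  then show ?thesis
    by (simp add: vec_eq_iff)
qed

lemma SL3_quat_invertible: "g \<in> SL3 \<Longrightarrow> invertible (g :: quat^3^3)"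
proof -
  assume "g \<in> SL3"
  then have "invertible (quat_cmat g)"
    by (simp add: SL3_quat_def invertible_det_nz)
  then obtain N where MN: "quat_cmat g ** N = mat 1" and NM: "N ** quat_cmat g = mat 1"
    unfolding invertible_def by blast
  then have "quat_cmat (quat_of_cmat N) = N"
    by (intro quat_cmat_quat_of_cmat quaternionic_inverse[OF quaternionic_quat_cmat])
  with MN NM have "quat_cmat (g ** quat_of_cmat N) = quat_cmat (mat 1)"
    and "quat_cmat (quat_of_cmat N ** g) = quat_cmat (mat 1)"
    by (simp_all add: quat_cmat_mult quat_cmat_mat_one)
  then show "invertible g"
    unfolding invertible_def by (metis quat_cmat_inj injD)
qed

theorem lemma1p9:
  shows "lemma1p9_claim TYPE(real) \<and> lemma1p9_claim TYPE(complex) \<and> lemma1p9_claim TYPE(quat)"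
  using lemma1p9_claim_if_SL3_invertible[OF SL3_real_invertible]
    lemma1p9_claim_if_SL3_invertible[OF SL3_complex_invertible]
    lemma1p9_claim_if_SL3_invertible[OF SL3_quat_invertible]
  by blast

end
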